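(* Let $\Gamma$ be a numerical semigroup minimally generated by $r_0,\ldots,r_h$ with $h\ge 1$, and suppose $\Gamma$ is free with respect to the arrangement $(r_0,\ldots,r_h)$. For $k\in\{1,\ldots,h+1\}$ let $d_k=\gcd(r_0,\ldots,r_{k-1})$, and for $k\in\{1,\ldots,h\}$ let $e_k=d_k/d_{k+1}$. Then: (1) $\gcd(d_h,r_h)=1$; (2) $d_h$ divides $\mathrm F(\Gamma)+r_h$ (and consequently $d_h$ does not divide $\mathrm F(\Gamma)$); (3) $e_kr_k\in\langle r_0,\ldots,r_{k-1}\rangle$ for all $k=1,\ldots,h$; in particular $e_k\ge 2$; (4) $d_1>d_2>\cdots>d_{h+1}=1$; (5) $d_h\le \frac{\mathrm c(\Gamma)}{r_h-1}+1$; (6) $(d_h-1)(r_h-1)\ge 2^h$.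
   Context: A numerical semigroup is a submonoid of $(\mathbb N,+)$ with finite complement in $\mathbb N$; it has a unique minimal generating system. $\mathrm F(\Gamma)$ is the largest integer not in $\Gamma$ ($\mathrm F(\mathbb N)=-1$) and $\mathrm c(\Gamma)=\mathrm F(\Gamma)+1$. $\langle X\rangle$ denotes the submonoid generated by $X$. Gluing: if $A$ is a set of positive integers and $A=A_1\cup A_2$ a nontrivial partition, $A$ is the gluing of $A_1$ and $A_2$ if $\mathrm{lcm}(d_1',d_2')\in\langle A_1\rangle\cap\langle A_2\rangle$ where $d_i'=\gcd(A_i)$; if $A$ is the minimal generating set of $\Gamma$, one says $\Gamma$ is the gluing of the numerical semigroups $\langle A_1/d_1'\rangle$ and $\langle A_2/d_2'\rangle$. Freeness for an arrangement $(r_0,\ldots,r_h)$ of the minimal generators is defined recursively: $\Gamma$ is free if $h=0$ (so $\Gamma=\mathbb N$, $r_0=1$), or if $h\ge1$, $\{r_0,\ldots,r_h\}$ is the gluing of $\{r_0,\ldots,r_{h-1}\}$ and $\{r_h\}$, and $\Gamma_{h-1}=\langle r_0/d_h,\ldots,r_{h-1}/d_h\rangle$ is free for the arrangement $(r_0/d_h,\ldots,r_{h-1}/d_h)$. *)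

theory Defs
  imports Complex_Main
begin

inductive_set gen :: "nat set \<Rightarrow> nat set" for X :: "nat set" where
  gen_zero: "0 \<in> gen X"
| gen_add: "x \<in> X \<Longrightarrow> y \<in> gen X \<Longrightarrow> x + y \<in> gen X"

definition numerical_semigroup :: "nat set \<Rightarrow> bool" where
  "numerical_semigroup S \<longleftrightarrow> 0 \<in> S \<and> (\<forall>x\<in>S. \<forall>y\<in>S. x + y \<in> S) \<and> finite (UNIV - S)"

definition minimal_generating_system :: "nat set \<Rightarrow> nat set \<Rightarrow> bool" where
  "minimal_generating_system A S \<longleftrightarrow> gen A = S \<and> (\<forall>B. B \<subset> A \<longrightarrow> gen B \<noteq> S)"

definition frobenius :: "nat set \<Rightarrow> int" where
  "frobenius S = (if S = UNIV then -1 else int (Max (UNIV - S)))"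

definition conductor :: "nat set \<Rightarrow> int" where
  "conductor S = frobenius S + 1"

definition gluing :: "nat set \<Rightarrow> nat set \<Rightarrow> nat set \<Rightarrow> bool" where
  "gluing A A1 A2 \<longleftrightarrow> (\<forall>a\<in>A. 0 < a) \<and> A = A1 \<union> A2 \<and> A1 \<inter> A2 = {} \<and>
     A1 \<noteq> {} \<and> A2 \<noteq> {} \<and>
     lcm (Gcd A1) (Gcd A2) \<in> gen A1 \<inter> gen A2"

function free_arr :: "nat list \<Rightarrow> bool" where
  "free_arr [] = False"
| "free_arr [x] = (x = 1)"
| "free_arr (x # y # zs) =
    (distinct (x # y # zs) \<and>
     numerical_semigroup (gen (set (x # y # zs))) \<and>
     minimal_generating_system (set (x # y # zs)) (gen (set (x # y # zs))) \<and>
     gluing (set (x # y # zs)) (set (butlast (x # y # zs))) {last (x # y # zs)} \<and>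
     free_arr (map (\<lambda>a. a div Gcd (set (butlast (x # y # zs)))) (butlast (x # y # zs))))"
  by pat_completeness auto
termination
  by (relation "measure length") auto

end

theory Submission
  imports Defs
begin

text \<open>Write \<open>r = d\<^sub>h r' @ [a]\<close>, so that \<open>\<Gamma>\<close> is the gluing of \<open>\<langle>r'\<rangle>\<close> and \<open>\<langle>a\<rangle>\<close>
  with \<open>d\<^sub>h a \<in> d\<^sub>h \<langle>r'\<rangle>\<close> and \<open>gcd d\<^sub>h a = 1\<close>. Every element of \<open>\<Gamma>\<close> then has a
  normal form \<open>d\<^sub>h y + \<mu> a\<close> with \<open>y \<in> \<langle>r'\<rangle>\<close> and \<open>\<mu> < d\<^sub>h\<close>. Since \<open>F + a \<in> \<Gamma>\<close> but \<open>F \<notin> \<Gamma>\<close>,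
  the normal form of \<open>F + a\<close> has \<open>\<mu> = 0\<close>, giving \<open>d\<^sub>h | F + a\<close>; and \<open>(d\<^sub>h - 1) a - d\<^sub>h\<close> has
  no normal form, which bounds the conductor from below by \<open>(d\<^sub>h - 1)(a - 1)\<close>.
  The remaining claims follow by induction along the arrangement: passing from
  \<open>r'\<close> to \<open>r\<close> multiplies the old generators by \<open>d\<^sub>h \<ge> 2\<close> and the new generator \<open>a\<close> is a
  non-trivial sum of old ones, so all generators are at least \<open>2\<^sup>h\<close>.\<close>

section \<open>The generated submonoid\<close>

lemma gen_generator: "x \<in> X \<Longrightarrow> x \<in> gen X"
  using gen_add[of x X 0] gen_zero by simp

lemma gen_add_closed: "a \<in> gen X \<Longrightarrow> b \<in> gen X \<Longrightarrow> a + b \<in> gen X"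
  by (induction a rule: gen.induct) (auto simp: add.assoc intro: gen_add)

lemma gen_mult_closed: "x \<in> gen X \<Longrightarrow> k * x \<in> gen X"
  by (induction k) (auto intro: gen_add_closed gen_zero)

lemma gen_least: "X \<subseteq> gen Y \<Longrightarrow> gen X \<subseteq> gen Y"
proof
  fix x assume "X \<subseteq> gen Y" "x \<in> gen X"
  from \<open>x \<in> gen X\<close> \<open>X \<subseteq> gen Y\<close> show "x \<in> gen Y"
    by (induction x rule: gen.induct) (auto intro: gen_add_closed gen_zero)
qed

lemma gen_mono: "X \<subseteq> Y \<Longrightarrow> gen X \<subseteq> gen Y"
  by (rule gen_least) (auto intro: gen_generator)

lemma Gcd_dvd_gen: "x \<in> gen X \<Longrightarrow> Gcd X dvd x"
  by (induction x rule: gen.induct) auto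

lemma gen_lower_bound: "y \<in> gen X \<Longrightarrow> \<forall>x\<in>X. m \<le> x \<Longrightarrow> y \<noteq> 0 \<Longrightarrow> (m::nat) \<le> y"
  by (induction y rule: gen.induct) force+

lemma gen_not_generator_ge_double:
  assumes "y \<in> gen X" "y \<notin> X" "y \<noteq> 0" "\<forall>x\<in>X. m \<le> x"
  shows "2 * m \<le> y"
  using assms(1)
proof (cases rule: gen.cases)
  case gen_zero
  with assms(3) show ?thesis by simp
next
  case (gen_add u v)
  with assms(2) have "v \<noteq> 0" by (metis add_0_right)
  with gen_add assms(4) have "m \<le> u" "m \<le> v" by (auto intro: gen_lower_bound)
  with gen_add show ?thesis by simp
qed

lemma gen_image_mult: "gen ((*) c ` X) = (*) c ` gen X"
proof
  show "gen ((*) c ` X) \<subseteq> (*) c ` gen X"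
  proof
    fix x assume "x \<in> gen ((*) c ` X)"
    then show "x \<in> (*) c ` gen X"
    proof (induction x rule: gen.induct)
      case gen_zero
      then show ?case using gen.gen_zero by force
    next
      case (gen_add x y)
      then obtain u v where "u \<in> X" "x = c * u" "v \<in> gen X" "y = c * v" by auto
      then show ?case
        using gen.gen_add[of u X v] by (auto simp: distrib_left intro!: rev_image_eqI[of "u + v"])
    qed
  qed
next
  show "(*) c ` gen X \<subseteq> gen ((*) c ` X)"
  proof
    fix x assume "x \<in> (*) c ` gen X"
    then obtain y where y: "y \<in> gen X" "x = c * y" by auto
    from y(1) have "c * y \<in> gen ((*) c ` X)"
      by (induction y rule: gen.induct) (auto simp: distrib_left intro: gen.intros)
    with y show "x \<in> gen ((*) c ` X)" by simp
  qed
qed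

lemma gen_insert_decomp: "x \<in> gen (insert a X) \<Longrightarrow> \<exists>y\<in>gen X. \<exists>l. x = y + l * a"
proof (induction x rule: gen.induct)
  case gen_zero
  then show ?case using gen.gen_zero by force
next
  case (gen_add x y)
  then obtain z l where z: "z \<in> gen X" "y = z + l * a" by auto
  show ?case
  proof (cases "x = a")
    case True
    with z show ?thesis by (intro bexI[of _ z] exI[of _ "Suc l"]) auto
  next
    case False
    with gen_add have "x \<in> X" by auto
    with z show ?thesis by (intro bexI[of _ "x + z"] exI[of _ l]) (auto intro: gen.gen_add)
  qed
qed

lemma minimal_generating_system_not_in_gen_remove:
  assumes m: "minimal_generating_system A S" and a: "a \<in> A"
  shows "a \<notin> gen (A - {a})"
proof
  assume "a \<in> gen (A - {a})"
  then have "A \<subseteq> gen (A - {a})" by (auto intro: gen_generator)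
  then have "gen A \<subseteq> gen (A - {a})" by (rule gen_least)
  moreover have "gen (A - {a}) \<subseteq> gen A" by (rule gen_mono) auto
  moreover have "A - {a} \<subset> A" using a by auto
  ultimately show False using m unfolding minimal_generating_system_def by auto
qed

section \<open>Numerical semigroups and the Frobenius number\<close>

lemma numerical_semigroup_gen_Gcd:
  assumes "numerical_semigroup (gen A)"
  shows "Gcd A = 1"
proof -
  from assms have "finite (UNIV - gen A)" unfolding numerical_semigroup_def by auto
  then obtain N where "\<forall>x\<in>UNIV - gen A. x < N" using finite_nat_set_iff_bounded by blast
  then have "N \<in> gen A" "Suc N \<in> gen A" by (auto, metis DiffI Suc_lessD UNIV_I less_irrefl_nat)
  then have "Gcd A dvd Suc N - N" by (intro dvd_diff_nat) (auto intro: Gcd_dvd_gen)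
  then show ?thesis by simp
qed

lemma frobenius_natE:
  assumes "numerical_semigroup \<Gamma>" "x \<notin> \<Gamma>"
  obtains f where "frobenius \<Gamma> = int f" "f \<notin> \<Gamma>" "\<And>z. z \<notin> \<Gamma> \<Longrightarrow> z \<le> f"
proof
  have fin: "finite (UNIV - \<Gamma>)" using assms(1) unfolding numerical_semigroup_def by auto
  have ne: "UNIV - \<Gamma> \<noteq> {}" using assms(2) by auto
  show "frobenius \<Gamma> = int (Max (UNIV - \<Gamma>))" unfolding frobenius_def using ne by auto
  show "Max (UNIV - \<Gamma>) \<notin> \<Gamma>" using Max_in[OF fin ne] by auto
  show "z \<le> Max (UNIV - \<Gamma>)" if "z \<notin> \<Gamma>" for z using fin that by (auto intro: Max_ge)
qed

section \<open>Gluing with a single generator\<close>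

text \<open>\<open>\<Gamma> = \<langle>a, d B\<rangle>\<close> with \<open>a \<in> \<langle>B\<rangle>\<close>, i.e. \<open>lcm d a = d a \<in> \<langle>d B\<rangle>\<close>.\<close>

context
  fixes B :: "nat set" and a d :: nat
  assumes a_in_gen: "a \<in> gen B"
begin

lemma gluing_normal_form:
  assumes "0 < d"
  shows "x \<in> gen (insert a ((*) d ` B)) \<longleftrightarrow> (\<exists>y\<in>gen B. \<exists>\<mu><d. x = d * y + \<mu> * a)"
proof
  assume "x \<in> gen (insert a ((*) d ` B))"
  then obtain z l where "z \<in> gen ((*) d ` B)" "x = z + l * a" using gen_insert_decomp by blast
  then obtain y where y: "y \<in> gen B" "x = d * y + l * a" by (auto simp: gen_image_mult)
  have "l * a = d * (l div d * a) + l mod d * a"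
    by (metis add_mult_distrib div_mult_mod_eq mult.assoc mult.commute)
  with y(2) have "x = d * (y + l div d * a) + l mod d * a" by (simp add: distrib_left)
  moreover have "y + l div d * a \<in> gen B" using y(1) a_in_gen by (intro gen_add_closed gen_mult_closed)
  moreover have "l mod d < d" using assms by simp
  ultimately show "\<exists>y\<in>gen B. \<exists>\<mu><d. x = d * y + \<mu> * a" by blast
next
  assume "\<exists>y\<in>gen B. \<exists>\<mu><d. x = d * y + \<mu> * a"
  then obtain y \<mu> where y: "y \<in> gen B" "x = d * y + \<mu> * a" by blast
  have "d * y \<in> gen (insert a ((*) d ` B))"
    using y(1) gen_mono[of "(*) d ` B" "insert a ((*) d ` B)"] gen_image_mult by blast
  moreover have "\<mu> * a \<in> gen (insert a ((*) d ` B))" by (auto intro: gen_mult_closed gen_generator)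
  ultimately show "x \<in> gen (insert a ((*) d ` B))" using y(2) by (simp add: gen_add_closed)
qed

lemma gluing_one_notin:
  assumes "2 \<le> d" "2 \<le> a"
  shows "1 \<notin> gen (insert a ((*) d ` B))"
proof
  assume "1 \<in> gen (insert a ((*) d ` B))"
  then have "\<exists>y\<in>gen B. \<exists>\<mu><d. 1 = d * y + \<mu> * a" using gluing_normal_form[of 1] assms(1) by simp
  then obtain y \<mu> where "1 = d * y + \<mu> * a" by blast
  with assms show False by (cases y; cases \<mu>) auto
qed

lemma gluing_frobenius_plus_dvd:
  assumes ns: "numerical_semigroup \<Gamma>" and \<Gamma>: "\<Gamma> = gen (insert a ((*) d ` B))"
    and "2 \<le> d" "2 \<le> a"
  shows "int d dvd frobenius \<Gamma> + int a"
proof -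
  have "1 \<notin> \<Gamma>" using gluing_one_notin assms by simp
  then obtain f where f: "frobenius \<Gamma> = int f" "f \<notin> \<Gamma>" "\<And>z. z \<notin> \<Gamma> \<Longrightarrow> z \<le> f"
    using frobenius_natE[OF ns] by blast
  have "f + a \<in> \<Gamma>" using f(3)[of "f + a"] assms(4) by linarith
  then obtain y \<mu> where y: "y \<in> gen B" "\<mu> < d" "f + a = d * y + \<mu> * a"
    using gluing_normal_form \<Gamma> assms by auto
  have "\<mu> = 0"
  proof (rule ccontr)
    assume "\<mu> \<noteq> 0"
    then have "f = d * y + (\<mu> - 1) * a" using y(3) by (cases \<mu>) auto
    with y(1,2) have "f \<in> gen (insert a ((*) d ` B))"
      using gluing_normal_form assms(3) by (auto intro!: bexI[of _ y] exI[of _ "\<mu> - 1"])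
    with \<Gamma> have "f \<in> \<Gamma>" by simp
    with f(2) show False ..
  qed
  with y(3) have "d dvd f + a" by simp
  then show ?thesis unfolding f(1) by (metis int_dvd_int_iff of_nat_add)
qed

lemma gluing_gap:
  assumes "coprime d a" "0 < d" "z + d = (d - 1) * a"
  shows "z \<notin> gen (insert a ((*) d ` B))"
proof
  assume "z \<in> gen (insert a ((*) d ` B))"
  then obtain y \<mu> where y: "\<mu> < d" "z = d * y + \<mu> * a" using gluing_normal_form assms(2) by auto
  define t where "t = d - 1 - \<mu>"
  have "d - 1 = \<mu> + t" using y(1) unfolding t_def by simp
  then have eq: "d * (y + 1) = t * a" using assms(3) y(2) by (simp add: add_mult_distrib)
  then have "d dvd t * a" by (simp flip: eq)
  with assms(1) have "d dvd t" by (simp add: coprime_dvd_mult_left_iff)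
  moreover have "t < d" unfolding t_def using assms(2) by simp
  ultimately have "t = 0" by (auto dest: dvd_imp_le)
  with eq assms(2) show False by simp
qed

lemma gluing_conductor_ge:
  assumes ns: "numerical_semigroup \<Gamma>" and \<Gamma>: "\<Gamma> = gen (insert a ((*) d ` B))"
    and "coprime d a" "2 \<le> d" "2 \<le> a"
  shows "int ((d - 1) * (a - 1)) \<le> conductor \<Gamma>"
proof -
  have "1 \<notin> \<Gamma>" using gluing_one_notin assms by simp
  then obtain f where f: "frobenius \<Gamma> = int f" "\<And>z. z \<notin> \<Gamma> \<Longrightarrow> z \<le> f"
    using frobenius_natE[OF ns] by blast
  have "d \<le> (d - 1) * 2" using assms(4) by linarith
  also have "\<dots> \<le> (d - 1) * a" using assms(5) by (rule mult_le_mono2)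
  finally have "d \<le> (d - 1) * a" .
  then have "(d - 1) * a - d \<le> f" using f(2) gluing_gap \<Gamma> assms by simp
  then have "(d - 1) * (a - 1) \<le> f + 1" by (simp add: diff_mult_distrib2)
  then show ?thesis unfolding conductor_def f(1) by linarith
qed

end

lemma pow2_le_glued_product:
  fixes a d h :: nat
  assumes "2 \<le> d" "coprime d a" "2 ^ h \<le> a" "1 \<le> h"
  shows "2 ^ h \<le> (d - 1) * (a - 1)"
proof (cases "d = 2")
  case True
  with assms(2) have "odd a" by (simp add: coprime_left_2_iff_odd)
  moreover have "even ((2::nat) ^ h)" using assms(4) by simp
  ultimately have "a \<noteq> 2 ^ h" by auto
  with assms True show ?thesis by simp
next
  case False
  have "2 ^ h \<le> 2 * (a - 1)"
    using assms(3,4) power_increasing[of 1 h "2::nat"] by simp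
  also have "\<dots> \<le> (d - 1) * (a - 1)" using assms(1) False by (intro mult_le_mono1) simp
  finally show ?thesis .
qed

lemma not_dvd_of_dvd_add_coprime:
  assumes "coprime d a" "2 \<le> d" "int d dvd f + int a"
  shows "\<not> int d dvd f"
proof
  assume "int d dvd f"
  with assms(3) have "d dvd a" by (metis dvd_add_right_iff int_dvd_int_iff)
  with assms(1) have "d = 1" by (metis coprime_common_divisor_nat dvd_refl)
  with assms(2) show False by simp
qed

lemma le_div_add_one_of_mult_le:
  assumes "int ((d - 1) * (a - 1)) \<le> c" "1 \<le> d" "2 \<le> a"
  shows "real d \<le> real_of_int c / (real a - 1) + 1"
proof -
  have "real ((d - 1) * (a - 1)) \<le> real_of_int c" using assms(1) by linarith
  then have "(real d - 1) * (real a - 1) \<le> real_of_int c" using assms(2,3) by (simp add: of_nat_diff)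
  moreover have "0 < real a - 1" using assms(3) by simp
  ultimately have "real d - 1 \<le> real_of_int c / (real a - 1)" by (simp add: pos_le_divide_eq)
  then show ?thesis by simp
qed

section \<open>Free arrangements\<close>

lemma free_arr_Gcd:
  assumes "free_arr r"
  shows "Gcd (set r) = 1"
  using assms
proof (cases r rule: free_arr.cases)
  case (3 x y zs)
  with assms have "numerical_semigroup (gen (set r))" by auto
  then show ?thesis by (rule numerical_semigroup_gen_Gcd)
qed auto

lemma free_arr_snocE:
  assumes fr: "free_arr r" and len: "2 \<le> length r"
  obtains d r' a where "r = map ((*) d) r' @ [a]" "free_arr r'" "2 \<le> d" "coprime d a"
    "a \<in> gen (set r')" "a \<notin> set r'" "0 < a"
proof -
  define b a d where "b = butlast r" and "a = last r" and "d = Gcd (set b)"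
  define r' where "r' = map (\<lambda>x. x div d) b"
  have rba: "r = b @ [a]" using len unfolding a_def b_def
    by (metis append_butlast_last_id list.size(3) not_numeral_le_zero)
  have F: "distinct r" "numerical_semigroup (gen (set r))"
    "minimal_generating_system (set r) (gen (set r))"
    "gluing (set r) (set b) {a}" "free_arr r'"
    using fr len by (cases r rule: free_arr.cases; simp add: a_def b_def d_def r'_def)+
  have pos: "\<forall>x\<in>set r. 0 < x" using F(4) unfolding gluing_def by auto
  have setr: "set r = insert a (set b)" using rba by auto
  have "b \<noteq> []" using len rba by auto
  with pos have "0 < d" unfolding d_def setr
    by (metis Gcd_0_iff gr0I insertCI list.set_sel(1) subsetD singletonD)
  have b: "b = map ((*) d) r'" unfolding r'_def map_map d_def
    by (intro map_idI[symmetric]) (simp add: dvd_mult_div_cancel)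
  have cop: "coprime d a"
    using numerical_semigroup_gen_Gcd[OF F(2)] unfolding d_def setr
    by (simp add: coprime_iff_gcd_eq_1 gcd.commute)
  have "lcm d a \<in> gen (set b)" using F(4) unfolding gluing_def d_def by auto
  then have "d * a \<in> (*) d ` gen (set r')" using cop b gen_image_mult by (simp add: lcm_coprime)
  then have agen: "a \<in> gen (set r')" using \<open>0 < d\<close> by auto
  have "a \<notin> set b" using F(1) rba by auto
  then have "a \<notin> gen (set b)" using minimal_generating_system_not_in_gen_remove[OF F(3), of a] setr by simp
  with \<open>d * a \<in> _\<close> b have "d \<noteq> 1" by (auto simp: gen_image_mult)
  have "0 < a" using pos setr by auto
  \<comment> \<open>otherwise the generator \<open>d a\<close> would be a proper multiple of the generator \<open>a\<close>\<close>
  have "a \<notin> set r'"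
  proof
    assume "a \<in> set r'"
    then have m: "d * a \<in> set r" using b setr by auto
    have "d * a \<in> gen {a}" using gen_mult_closed[OF gen_generator[of a "{a}"]] by simp
    moreover have "gen {a} \<subseteq> gen (set r - {d * a})"
      using \<open>d \<noteq> 1\<close> \<open>0 < a\<close> setr by (intro gen_mono) auto
    ultimately show False using minimal_generating_system_not_in_gen_remove[OF F(3) m] by auto
  qed
  show ?thesis
    using that rba b F(5) \<open>0 < d\<close> \<open>d \<noteq> 1\<close> cop agen \<open>a \<notin> set r'\<close> \<open>0 < a\<close> by fastforce
qed

lemma free_arr_ge_pow2: "free_arr r \<Longrightarrow> x \<in> set r \<Longrightarrow> 2 ^ (length r - 1) \<le> x"
proof (induction r arbitrary: x rule: length_induct)
  case (1 r)
  show ?case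
  proof (cases "2 \<le> length r")
    case False
    with "1.prems" show ?thesis by (cases r rule: free_arr.cases) auto
  next
    case True
    then obtain d r' a where r: "r = map ((*) d) r' @ [a]" "free_arr r'" "2 \<le> d"
      "a \<in> gen (set r')" "a \<notin> set r'" "0 < a" using free_arr_snocE "1.prems" by metis
    let ?m = "(2::nat) ^ (length r' - 1)"
    have IH: "\<forall>y\<in>set r'. ?m \<le> y" using "1.IH" r by simp
    have pow: "(2::nat) ^ (length r - 1) = 2 * ?m" using r(1) True by (cases r') auto
    have "2 * ?m \<le> d * y" if "y \<in> set r'" for y using IH that r(3) by (simp add: mult_le_mono)
    moreover have "2 * ?m \<le> a" using gen_not_generator_ge_double r IH by auto
    ultimately show ?thesis using "1.prems"(2) r(1) pow by auto
  qed
qed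

text \<open>The quotient is \<open>e\<^sub>k = d\<^sub>k / d\<^sub>k\<^sub>+\<^sub>1\<close>, which is unchanged when the first \<open>k + 1\<close>
  generators are scaled by a common factor.\<close>

lemma free_arr_multiple_in_gen:
  "free_arr r \<Longrightarrow> 0 < k \<Longrightarrow> k < length r \<Longrightarrow>
   (Gcd (set (take k r)) div Gcd (set (take (Suc k) r))) * r ! k \<in> gen (set (take k r))"
proof (induction r arbitrary: k rule: length_induct)
  case (1 r)
  then have "2 \<le> length r" by linarith
  then obtain d r' a where r: "r = map ((*) d) r' @ [a]" "free_arr r'" "2 \<le> d" "a \<in> gen (set r')"
    using free_arr_snocE "1.prems"(1) by metis
  show ?case
  proof (cases "k = length r'")
    case True
    then have "take k r = map ((*) d) r'" "take (Suc k) r = r" "r ! k = a"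
      using r(1) by (auto simp: nth_append)
    moreover have "Gcd (set r) = 1" "Gcd (set r') = 1" using "1.prems"(1) r(2) by (simp_all add: free_arr_Gcd)
    ultimately show ?thesis using r(4) by (auto simp: Gcd_mult gen_image_mult)
  next
    case False
    then have k: "k < length r'" using "1.prems" r(1) by simp
    then have t: "take k r = map ((*) d) (take k r')" "take (Suc k) r = map ((*) d) (take (Suc k) r')"
      "r ! k = d * r' ! k" using r(1) by (simp_all add: take_map nth_append)
    let ?e' = "Gcd (set (take k r')) div Gcd (set (take (Suc k) r'))"
    have "?e' * r' ! k \<in> gen (set (take k r'))" using "1.IH" r "1.prems"(2) k by simp
    then have "d * (?e' * r' ! k) \<in> gen (set (take k r))"
      unfolding t set_map gen_image_mult by (rule imageI)
    moreover have "Gcd (set (take k r)) div Gcd (set (take (Suc k) r)) = ?e'"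
      using r(3) unfolding t by (simp add: Gcd_mult)
    ultimately show ?thesis unfolding t(3) by (simp add: mult.left_commute)
  qed
qed

lemma Gcd_take_Suc_dvd: "Gcd (set (take (Suc k) xs)) dvd Gcd (set (take k (xs :: nat list)))"
  by (meson Gcd_dvd Gcd_greatest set_take_subset_set_take subsetD lessI less_imp_le)

lemma Gcd_take_Suc_less:
  assumes mgs: "minimal_generating_system (set r) S" and "distinct r" "\<forall>x\<in>set r. 0 < x"
    and k: "0 < k" "k < length r"
    and mem: "(Gcd (set (take k r)) div Gcd (set (take (Suc k) r))) * r ! k \<in> gen (set (take k r))"
  shows "Gcd (set (take (Suc k) r)) < Gcd (set (take k r))"
proof -
  have "r ! 0 \<in> set r" using k by (intro nth_mem) linarith
  with assms(3) have "0 < r ! 0" by blast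
  moreover have "r ! 0 \<in> set (take k r)" using k by (cases r; cases k) auto
  ultimately have "Gcd (set (take k r)) \<noteq> 0" by auto
  moreover have "Gcd (set (take (Suc k) r)) \<noteq> Gcd (set (take k r))"
  proof
    assume eq: "Gcd (set (take (Suc k) r)) = Gcd (set (take k r))"
    have "r ! k \<notin> set (take k r)"
      using assms(2) k(2) by (simp add: in_set_conv_nth nth_eq_iff_index_eq)
    then have "set (take k r) \<subseteq> set r - {r ! k}" by (auto dest: in_set_takeD)
    moreover have "r ! k \<in> gen (set (take k r))" using mem eq \<open>Gcd (set (take k r)) \<noteq> 0\<close> by simp
    ultimately have "r ! k \<in> gen (set r - {r ! k})" using gen_mono by blast
    then show False using minimal_generating_system_not_in_gen_remove[OF mgs] k(2) by simp
  qed
  ultimately show ?thesis using Gcd_take_Suc_dvd by (simp add: dvd_imp_le le_neq_implies_less)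
qed

lemma two_le_div_of_dvd_less: "(m::nat) dvd n \<Longrightarrow> m < n \<Longrightarrow> 2 \<le> n div m"
  by (elim dvdE) (auto simp: less_2_cases_iff)

theorem lemma3p3:
  fixes \<Gamma> :: "nat set" and r :: "nat list" and h :: nat
  assumes "numerical_semigroup \<Gamma>"
    and "length r = h + 1" and "distinct r"
    and "minimal_generating_system (set r) \<Gamma>"
    and "h \<ge> 1"
    and "free_arr r"
  defines "d \<equiv> (\<lambda>k. Gcd (set (take k r)))"
  defines "e \<equiv> (\<lambda>k. d k div d (Suc k))"
  shows "(gcd (d h) (r ! h) = 1)
    \<and> (int (d h) dvd frobenius \<Gamma> + int (r ! h))
    \<and> (\<not> int (d h) dvd frobenius \<Gamma>)
    \<and> (\<forall>k\<in>{1..h}. e k * r ! k \<in> gen (set (take k r)))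
    \<and> (\<forall>k\<in>{1..h}. e k \<ge> 2)
    \<and> (\<forall>k\<in>{1..h}. d (Suc k) < d k)
    \<and> (d (h + 1) = 1)
    \<and> (real (d h) \<le> real_of_int (conductor \<Gamma>) / (real (r ! h) - 1) + 1)
    \<and> ((d h - 1) * (r ! h - 1) \<ge> 2 ^ h)"
proof -
  note ns = assms(1) and len = assms(2) and mgs = assms(4) and fr = assms(6)
  have "2 \<le> length r" using len assms(5) by simp
  then obtain dd r' a where r: "r = map ((*) dd) r' @ [a]" "free_arr r'" "2 \<le> dd" "coprime dd a"
      "a \<in> gen (set r')"
    using free_arr_snocE[OF fr] by metis
  have "length r' = h" using r(1) len by simp
  then have rh: "r ! h = a" and dh: "d h = dd"
    using r free_arr_Gcd[OF r(2)] by (simp_all add: d_def nth_append Gcd_mult)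
  have dh1: "d (h + 1) = 1" using free_arr_Gcd[OF fr] len by (simp add: d_def)
  have ge: "\<forall>x\<in>set r. 2 ^ h \<le> x" using free_arr_ge_pow2[OF fr] len by simp
  then have pos: "\<forall>x\<in>set r. 0 < x" by (auto intro: less_le_trans[of 0 "2 ^ h"])
  have "2 \<le> (2::nat) ^ h" using assms(5) power_increasing[of 1 h "2::nat"] by simp
  with ge r(1) have a: "2 ^ h \<le> a" "2 \<le> a" by auto
  have \<Gamma>: "\<Gamma> = gen (insert a ((*) dd ` set r'))"
    using mgs r(1) unfolding minimal_generating_system_def by auto
  have frob: "int dd dvd frobenius \<Gamma> + int a"
    using gluing_frobenius_plus_dvd[OF r(5) ns \<Gamma> r(3) a(2)] .
  have "\<not> int dd dvd frobenius \<Gamma>" using not_dvd_of_dvd_add_coprime[OF r(4,3) frob] .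
  moreover have "real dd \<le> real_of_int (conductor \<Gamma>) / (real a - 1) + 1"
    using le_div_add_one_of_mult_le gluing_conductor_ge[OF r(5) ns \<Gamma> r(4,3) a(2)] r(3) a(2) by simp
  moreover have mult: "\<forall>k\<in>{1..h}. e k * r ! k \<in> gen (set (take k r))"
    using free_arr_multiple_in_gen[OF fr] len unfolding e_def d_def by simp
  moreover have less: "\<forall>k\<in>{1..h}. d (Suc k) < d k"
    using Gcd_take_Suc_less[OF mgs assms(3) pos] mult len unfolding e_def d_def by simp
  moreover have "\<forall>k\<in>{1..h}. e k \<ge> 2"
    using less two_le_div_of_dvd_less Gcd_take_Suc_dvd unfolding e_def d_def by blast
  ultimately show ?thesis
    using r(4) frob dh dh1 rh pow2_le_glued_product[OF r(3,4) a(1) assms(5)]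
    by (simp add: coprime_iff_gcd_eq_1)
qed
end
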